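(* Let $T\colon[0,1)\to[0,1)$ be an interval exchange transformation and $\lambda$ Lebesgue measure. Then $C_\psi(T)\le\tfrac12$, where \[C_\psi(T)=\sup\big(\{0\}\cup\{\alpha>0:\ \liminf_{n\to\infty}n^\alpha|T^nx-T^ny|=0\text{ for }\lambda\times\lambda\text{-a.e. }(x,y)\}\big).\]
   Context: An $r$-interval exchange transformation is given by a permutation $\pi$ of $\{1,\dots,r\}$ and lengths $\ell_i>0$ with $\sum\ell_i=1$: with $s_0=0$, $s_k=\sum_{i\le k}\ell_i$, $I_k=[s_{k-1},s_k)$, one sets $T(x)=x-\sum_{i<k}\ell_i+\sum_{\pi(i')<\pi(k)}\ell_{i'}$ for $x\in I_k$. *)

theory Defs
  imports "HOL-Analysis.Analysis" "HOL-Combinatorics.Permutations"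
begin

definition iet_s :: "(nat \<Rightarrow> real) \<Rightarrow> nat \<Rightarrow> real" where
  "iet_s l k = (\<Sum>i\<in>{1..k}. l i)"

definition iet_map :: "nat \<Rightarrow> (nat \<Rightarrow> nat) \<Rightarrow> (nat \<Rightarrow> real) \<Rightarrow> real \<Rightarrow> real" where
  "iet_map r p l x =
     (\<Sum>k\<in>{1..r}. if iet_s l (k - 1) \<le> x \<and> x < iet_s l k
        then x - (\<Sum>i\<in>{1..<k}. l i) + (\<Sum>i'\<in>{i'\<in>{1..r}. p i' < p k}. l i')
        else 0)"

definition is_iet :: "(real \<Rightarrow> real) \<Rightarrow> bool" where
  "is_iet T \<longleftrightarrow> (\<exists>r p l. r \<ge> 1 \<and> p permutes {1..r} \<and> (\<forall>i\<in>{1..r}. l i > 0)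
      \<and> (\<Sum>i\<in>{1..r}. l i) = 1 \<and> (\<forall>x\<in>{0..<1}. T x = iet_map r p l x))"

definition C_psi :: "(real \<Rightarrow> real) \<Rightarrow> ereal" where
  "C_psi T = Sup ({0} \<union> {ereal \<alpha> | \<alpha>. \<alpha> > 0 \<and>
      (AE z in lborel \<Otimes>\<^sub>M lborel. z \<in> {0..<1} \<times> {0..<1} \<longrightarrow>
         liminf (\<lambda>n. ereal (real n powr \<alpha> * \<bar>(T ^^ n) (fst z) - (T ^^ n) (snd z)\<bar>)) = 0)})"

end

theory Submission
  imports Defs
begin

text \<open>An interval exchange is a translation on each of finitely many pieces, and the translated
  pieces are pairwise disjoint; hence the pair map \<open>T \<times> T\<close> does not increase planar Lebesgue measure.
  If \<open>|x - y| \<ge> d\<close> but \<open>|T\<^sup>n x - T\<^sup>n y| < d\<close>, then at the first time \<open>m \<le> n\<close> at which the distance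
  drops below \<open>d\<close> the two points come from different pieces, so \<open>(T\<^sup>m x, T\<^sup>m y)\<close> lies in a
  \<open>d\<close>-box around one of the finitely many diagonal points \<open>(a, a)\<close>, \<open>a\<close> a left endpoint of a
  translated piece. With \<open>q = 2\<^sup>-\<^sup>\<alpha>\<close>, the pairs at distance \<open>\<ge> q\<^sup>k\<close> that come closer than \<open>q\<^sup>k\<close> before
  time \<open>2\<^sup>k\<^sup>+\<^sup>1\<close> therefore have measure \<open>O(2\<^sup>k q\<^sup>2\<^sup>k)\<close>, which is summable when \<open>\<alpha> > 1/2\<close>. A pair at
  distance at least \<open>q\<^sup>k\<^sub>0\<close> with \<open>liminf n\<^sup>\<alpha> |T\<^sup>n x - T\<^sup>n y| = 0\<close> lies in one of these sets with
  \<open>k \<ge> k\<^sub>0\<close>. The tail of the series is small and the pairs closer than \<open>1/8\<close> cover measure at most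
  \<open>3/8\<close>, so such pairs cannot have full measure in the unit square.\<close>

lemma iet_s_0 [simp]: "iet_s l 0 = 0"
  by (simp add: iet_s_def)

lemma iet_s_Suc: "iet_s l (Suc k) = iet_s l k + l (Suc k)"
  by (simp add: iet_s_def)

lemma iet_s_strict_mono:
  assumes pos: "\<forall>i\<in>{1..r}. l i > 0" and "i < j" "j \<le> r"
  shows "iet_s l i < iet_s l j"
  using assms(2,3)
proof (induction j)
  case 0 then show ?case by simp
next
  case (Suc j)
  have "l (Suc j) > 0" using pos Suc.prems by auto
  moreover have "iet_s l i \<le> iet_s l j"
    using Suc by (cases "i < j") (auto simp: less_Suc_eq)
  ultimately show ?case by (simp add: iet_s_Suc)
qed

lemma iet_s_mono:
  assumes pos: "\<forall>i\<in>{1..r}. l i > 0" and "i \<le> j" "j \<le> r"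
  shows "iet_s l i \<le> iet_s l j"
  using iet_s_strict_mono[OF pos, of i j] assms by (cases "i = j") auto

lemma iet_s_pred: "k \<ge> 1 \<Longrightarrow> (\<Sum>i\<in>{1..<k}. l i) = iet_s l (k - 1)"
  unfolding iet_s_def by (cases k) (auto simp: atLeastLessThanSuc_atLeastAtMost)

lemma iet_interval_exists:
  assumes pos: "\<forall>i\<in>{1..r}. l i > 0" and tot: "iet_s l r = 1"
    and x: "0 \<le> x" "x < 1"
  shows "\<exists>k\<in>{1..r}. iet_s l (k - 1) \<le> x \<and> x < iet_s l k"
proof -
  define k where "k = (LEAST k. x < iet_s l k)"
  have ex: "x < iet_s l r" using tot x by simp
  have k1: "x < iet_s l k" unfolding k_def by (rule LeastI[of _ r]) (rule ex)
  have kr: "k \<le> r" unfolding k_def by (rule Least_le) (rule ex)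
  have k0: "k \<noteq> 0" using k1 x by (cases k) auto
  have "\<not> x < iet_s l (k - 1)" unfolding k_def
    by (rule not_less_Least) (use k0 in \<open>simp add: k_def\<close>)
  then show ?thesis using k1 kr k0 by (intro bexI[of _ k]) auto
qed

lemma iet_interval_unique:
  assumes pos: "\<forall>i\<in>{1..r}. l i > 0"
    and j: "j \<in> {1..r}" and k: "k \<in> {1..r}"
    and "iet_s l (j - 1) \<le> x \<and> x < iet_s l j"
    and "iet_s l (k - 1) \<le> x \<and> x < iet_s l k"
  shows "j = k"
proof (rule ccontr)
  assume "j \<noteq> k"
  then consider "j < k" | "k < j" by arith
  then show False
  proof cases
    case 1
    then have "iet_s l j \<le> iet_s l (k - 1)" using iet_s_mono[OF pos, of j "k - 1"] k by auto
    then show False using assms by auto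
  next
    case 2
    then have "iet_s l k \<le> iet_s l (j - 1)" using iet_s_mono[OF pos, of k "j - 1"] j by auto
    then show False using assms by auto
  qed
qed

definition iet_image_start :: "nat \<Rightarrow> (nat \<Rightarrow> nat) \<Rightarrow> (nat \<Rightarrow> real) \<Rightarrow> nat \<Rightarrow> real" where
  "iet_image_start r p l k = (\<Sum>i\<in>{i\<in>{1..r}. p i < p k}. l i)"

lemma iet_map_on_interval:
  assumes pos: "\<forall>i\<in>{1..r}. l i > 0"
    and k: "k \<in> {1..r}" and x: "iet_s l (k - 1) \<le> x" "x < iet_s l k"
  shows "iet_map r p l x = x + (iet_image_start r p l k - iet_s l (k - 1))"
proof -
  have on_k: "iet_s l (j - 1) \<le> x \<and> x < iet_s l j \<longleftrightarrow> j = k" if "j \<in> {1..r}" for j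
    using iet_interval_unique[OF pos that k] x by blast
  have "iet_map r p l x = (\<Sum>j\<in>{1..r}. if j = k then
          x - (\<Sum>i\<in>{1..<k}. l i) + iet_image_start r p l k else 0)"
    unfolding iet_map_def iet_image_start_def
    by (intro sum.cong refl) (simp only: on_k cong: if_cong)
  also have "\<dots> = x - (\<Sum>i\<in>{1..<k}. l i) + iet_image_start r p l k"
    using k by simp
  finally show ?thesis using iet_s_pred[of k l] k by simp
qed

lemma iet_image_start_add_le:
  assumes pos: "\<forall>i\<in>{1..r}. l i > 0"
    and j: "j \<in> {1..r}" and k: "k \<in> {1..r}" and "p j < p k"
  shows "iet_image_start r p l j + l j \<le> iet_image_start r p l k"
proof -
  have "iet_image_start r p l j + l j = (\<Sum>i\<in>insert j {i\<in>{1..r}. p i < p j}. l i)"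
    unfolding iet_image_start_def by (subst sum.insert) auto
  also have "\<dots> \<le> iet_image_start r p l k"
    unfolding iet_image_start_def using assms by (intro sum_mono2) (auto simp: less_imp_le)
  finally show ?thesis .
qed

lemma iet_image_in_unit:
  assumes pos: "\<forall>i\<in>{1..r}. l i > 0" and tot: "(\<Sum>i\<in>{1..r}. l i) = 1"
    and k: "k \<in> {1..r}"
  shows "0 \<le> iet_image_start r p l k" "iet_image_start r p l k + l k \<le> 1"
proof -
  show "0 \<le> iet_image_start r p l k"
    unfolding iet_image_start_def using pos by (intro sum_nonneg) (auto simp: less_imp_le)
  have "iet_image_start r p l k + l k = (\<Sum>i\<in>insert k {i\<in>{1..r}. p i < p k}. l i)"
    unfolding iet_image_start_def by (subst sum.insert) auto
  also have "\<dots> \<le> (\<Sum>i\<in>{1..r}. l i)"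
    using k pos by (intro sum_mono2) (auto simp: less_imp_le)
  finally show "iet_image_start r p l k + l k \<le> 1" using tot by simp
qed

abbreviation unit_square :: "(real \<times> real) set" where
  "unit_square \<equiv> {0..<1} \<times> {0..<1}"

definition diag_box :: "real \<Rightarrow> real \<Rightarrow> (real \<times> real) set" where
  "diag_box a d = {a - d<..<a + d} \<times> {a - d<..<a + d}"

lemma emeasure_lborel_Times:
  fixes A B :: "real set"
  assumes "A \<in> sets borel" "B \<in> sets borel"
  shows "emeasure lborel (A \<times> B) = emeasure lborel A * emeasure lborel B"
  using assms by (simp add: lborel_prod[symmetric] lborel.emeasure_pair_measure_Times)

lemma emeasure_lborel_translate_vimage:
  fixes c :: "'a::euclidean_space"
  assumes "A \<in> sets borel"
  shows "emeasure lborel ((+) c -` A) = emeasure lborel A"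
proof -
  have "(+) c \<in> borel_measurable (lborel :: 'a measure)"
    by (auto intro!: borel_measurable_continuous_onI continuous_intros)
  then have "emeasure (distr lborel borel ((+) c)) A = emeasure lborel ((+) c -` A)"
    using assms by (subst emeasure_distr) auto
  then show ?thesis by (simp add: lborel_distr_plus)
qed

lemma translate_vimage_borel:
  fixes c :: "'a::euclidean_space"
  assumes "A \<in> sets borel"
  shows "(+) c -` A \<in> sets borel"
proof -
  have "(+) c \<in> borel_measurable (borel :: 'a measure)"
    by (auto intro!: borel_measurable_continuous_onI continuous_intros)
  from measurable_sets[OF this assms] show ?thesis by simp
qed

lemma diag_box_borel: "diag_box a d \<in> sets borel"
  unfolding diag_box_def by (intro borel_Times) auto

lemma emeasure_diag_box:
  assumes "d \<ge> 0"
  shows "emeasure lborel (diag_box a d) = ennreal (4 * d\<^sup>2)"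
  using assms unfolding diag_box_def
  by (simp add: emeasure_lborel_Times ennreal_mult[symmetric] power2_eq_square)

lemma emeasure_unit_square: "emeasure lborel unit_square = 1"
  by (simp add: emeasure_lborel_Times)

definition diagonal_strip_cover :: "nat \<Rightarrow> (real \<times> real) set" where
  "diagonal_strip_cover N =
     (\<Union>i<N. {real i / N..<(real i + 1) / N} \<times> {(real i - 1) / N<..<(real i + 2) / N})"

lemma diagonal_strip_cover_borel: "diagonal_strip_cover N \<in> sets borel"
  unfolding diagonal_strip_cover_def by (intro sets.finite_UN) (auto intro!: borel_Times)

lemma emeasure_diagonal_strip_cover:
  assumes "N > 0"
  shows "emeasure lborel (diagonal_strip_cover N) \<le> ennreal (3 / N)"
proof -
  have "emeasure lborel (diagonal_strip_cover N)
      \<le> (\<Sum>i<N. emeasure lborel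
            ({real i / N..<(real i + 1) / N} \<times> {(real i - 1) / N<..<(real i + 2) / N}))"
    unfolding diagonal_strip_cover_def
    by (intro emeasure_subadditive_finite) (auto intro!: borel_Times)
  also have "\<dots> = (\<Sum>i<N. ennreal (1 / N) * ennreal (3 / N))"
    using assms by (intro sum.cong refl) (subst emeasure_lborel_Times, auto simp: field_simps)
  also have "\<dots> = ennreal (3 / N)"
    using assms by (simp add: ennreal_of_nat_eq_real_of_nat ennreal_mult[symmetric])
  finally show ?thesis .
qed

lemma diagonal_strip_cover_covers:
  assumes "N > 0" "0 \<le> x" "x < 1" "\<bar>x - y\<bar> < 1 / N"
  shows "(x, y) \<in> diagonal_strip_cover N"
proof -
  define i where "i = nat \<lfloor>N * x\<rfloor>"
  have "0 \<le> \<lfloor>N * x\<rfloor>" "\<lfloor>N * x\<rfloor> < N"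
    using assms by (simp_all add: floor_less_iff)
  then have "real i \<le> N * x" "N * x < real i + 1" "i < N"
    unfolding i_def by linarith+
  moreover have "\<bar>N * x - N * y\<bar> = N * \<bar>x - y\<bar>"
    by (simp add: abs_mult flip: right_diff_distrib)
  then have "N * x - 1 < N * y" "N * y < N * x + 1"
    using assms by (simp_all add: abs_less_iff field_simps)
  ultimately have "real i / N \<le> x" "x < (real i + 1) / N"
    "(real i - 1) / N < y" "y < (real i + 2) / N"
    using assms(1) by (simp_all add: field_simps)
  with \<open>i < N\<close> show ?thesis unfolding diagonal_strip_cover_def by (intro UN_I[of i]) simp_all
qed

lemma liminf_less_frequently:
  fixes f :: "nat \<Rightarrow> 'a::complete_linorder"
  assumes "liminf f < a"
  shows "\<exists>n\<ge>N. f n < a"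
proof (rule ccontr)
  assume "\<not> ?thesis"
  then have "\<forall>\<^sub>F n in sequentially. a \<le> f n"
    by (auto simp: eventually_sequentially not_less)
  then have "a \<le> liminf f" by (rule Liminf_bounded)
  with assms show False by simp
qed

lemma powr_neg_pow_mult_pow_powr: "((2::real) powr - \<alpha>) ^ k * real (2 ^ k) powr \<alpha> = 1"
  by (simp add: powr_realpow[symmetric] powr_powr powr_add[symmetric])

locale piecewise_translation =
  fixes T :: "real \<Rightarrow> real" and K :: "nat set" and lo hi c :: "nat \<Rightarrow> real"
  assumes finite_pieces: "finite K"
    and pieces_cover: "\<And>x. 0 \<le> x \<Longrightarrow> x < 1 \<Longrightarrow> \<exists>k\<in>K. lo k \<le> x \<and> x < hi k"
    and pieces_in_unit: "\<And>k. k \<in> K \<Longrightarrow> 0 \<le> lo k \<and> hi k \<le> 1"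
    and translate_on_piece: "\<And>k x. k \<in> K \<Longrightarrow> lo k \<le> x \<Longrightarrow> x < hi k \<Longrightarrow> T x = x + c k"
    and images_in_unit: "\<And>k. k \<in> K \<Longrightarrow> 0 \<le> lo k + c k \<and> hi k + c k \<le> 1"
    and images_disjoint: "\<And>j k. j \<in> K \<Longrightarrow> k \<in> K \<Longrightarrow> j \<noteq> k \<Longrightarrow>
       hi j + c j \<le> lo k + c k \<or> hi k + c k \<le> lo j + c j"
begin

lemma maps_unit_interval:
  assumes "0 \<le> x" "x < 1"
  shows "0 \<le> T x \<and> T x < 1"
proof -
  obtain k where k: "k \<in> K" "lo k \<le> x" "x < hi k" using pieces_cover[OF assms] by blast
  with translate_on_piece[OF k] images_in_unit[OF k(1)] show ?thesis by auto
qed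

lemma funpow_maps_unit_interval: "0 \<le> x \<Longrightarrow> x < 1 \<Longrightarrow> 0 \<le> (T ^^ n) x \<and> (T ^^ n) x < 1"
  by (induction n) (auto dest: maps_unit_interval)

abbreviation piece_pair :: "nat \<times> nat \<Rightarrow> (real \<times> real) set" where
  "piece_pair jk \<equiv> {lo (fst jk)..<hi (fst jk)} \<times> {lo (snd jk)..<hi (snd jk)}"

definition pair_preimage :: "nat \<Rightarrow> (real \<times> real) set \<Rightarrow> (real \<times> real) set" where
  "pair_preimage n B = {z \<in> unit_square. ((T ^^ n) (fst z), (T ^^ n) (snd z)) \<in> B}"

lemma pair_preimage_1: "pair_preimage 1 B = {z \<in> unit_square. (T (fst z), T (snd z)) \<in> B}"
  by (simp add: pair_preimage_def)

lemma pair_preimage_1_eq_Union: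
  "pair_preimage 1 B =
     (\<Union>jk\<in>K \<times> K. piece_pair jk \<inter> (+) (c (fst jk), c (snd jk)) -` B)"
proof (intro set_eqI iffI)
  fix z assume "z \<in> pair_preimage 1 B"
  then obtain x y where z: "z = (x, y)" "0 \<le> x" "x < 1" "0 \<le> y" "y < 1" "(T x, T y) \<in> B"
    unfolding pair_preimage_1 by (cases z) auto
  obtain j where j: "j \<in> K" "lo j \<le> x" "x < hi j" using pieces_cover z by auto
  obtain k where k: "k \<in> K" "lo k \<le> y" "y < hi k" using pieces_cover z by auto
  show "z \<in> (\<Union>jk\<in>K \<times> K. piece_pair jk \<inter> (+) (c (fst jk), c (snd jk)) -` B)"
    using j k z translate_on_piece[OF j] translate_on_piece[OF k]
    by (intro UN_I[of "(j, k)"]) (auto simp: add.commute)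
next
  fix z assume "z \<in> (\<Union>jk\<in>K \<times> K. piece_pair jk \<inter> (+) (c (fst jk), c (snd jk)) -` B)"
  then obtain j k x y where jk: "j \<in> K" "k \<in> K" "z = (x, y)" "lo j \<le> x" "x < hi j"
     "lo k \<le> y" "y < hi k" "(c j + x, c k + y) \<in> B" by auto
  show "z \<in> pair_preimage 1 B"
    using jk pieces_in_unit[OF jk(1)] pieces_in_unit[OF jk(2)]
      translate_on_piece[OF jk(1,4,5)] translate_on_piece[OF jk(2,6,7)]
    unfolding pair_preimage_1 by (auto simp: add.commute)
qed

lemma pair_preimage_Suc: "pair_preimage (Suc n) B = pair_preimage 1 (pair_preimage n B)"
  unfolding pair_preimage_1 unfolding pair_preimage_def
  by (auto simp del: funpow.simps simp: funpow_Suc_right dest: maps_unit_interval)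

lemma pair_preimage_borel: "B \<in> sets borel \<Longrightarrow> pair_preimage n B \<in> sets borel"
proof (induction n arbitrary: B)
  case 0
  have "pair_preimage 0 B = unit_square \<inter> B" unfolding pair_preimage_def by auto
  with 0 show ?case by (auto intro!: sets.Int borel_Times)
next
  case (Suc n)
  then have "pair_preimage n B \<in> sets borel" by blast
  then show ?case unfolding pair_preimage_Suc pair_preimage_1_eq_Union using finite_pieces
    by (intro sets.finite_UN)
      (auto intro!: sets.Int borel_Times translate_vimage_borel simp: finite_cartesian_product)
qed

lemma emeasure_pair_preimage_1_le:
  assumes B: "B \<in> sets borel"
  shows "emeasure lborel (pair_preimage 1 B) \<le> emeasure lborel B"
proof -
  let ?J = "\<lambda>jk. {lo (fst jk) + c (fst jk)..<hi (fst jk) + c (fst jk)}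
                \<times> {lo (snd jk) + c (snd jk)..<hi (snd jk) + c (snd jk)}"
  have fin: "finite (K \<times> K)" using finite_pieces by simp
  have shift: "piece_pair jk \<inter> (+) (c (fst jk), c (snd jk)) -` B
      = (+) (c (fst jk), c (snd jk)) -` (?J jk \<inter> B)" for jk
    by auto
  have disj: "disjoint_family_on (\<lambda>jk. ?J jk \<inter> B) (K \<times> K)"
    unfolding disjoint_family_on_def
  proof (intro ballI impI)
    fix jk jk' assume "jk \<in> K \<times> K" "jk' \<in> K \<times> K" "jk \<noteq> jk'"
    then have "fst jk \<noteq> fst jk' \<or> snd jk \<noteq> snd jk'" by (auto simp: prod_eq_iff)
    then show "(?J jk \<inter> B) \<inter> (?J jk' \<inter> B) = {}"
      using images_disjoint[of "fst jk" "fst jk'"] images_disjoint[of "snd jk" "snd jk'"]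
        \<open>jk \<in> K \<times> K\<close> \<open>jk' \<in> K \<times> K\<close> by (fastforce simp: mem_Times_iff)
  qed
  have "emeasure lborel (pair_preimage 1 B)
      \<le> (\<Sum>jk\<in>K \<times> K. emeasure lborel (piece_pair jk \<inter> (+) (c (fst jk), c (snd jk)) -` B))"
    unfolding pair_preimage_1_eq_Union using fin B
    by (intro emeasure_subadditive_finite)
      (auto intro!: sets.Int borel_Times translate_vimage_borel)
  also have "\<dots> = (\<Sum>jk\<in>K \<times> K. emeasure lborel (?J jk \<inter> B))"
    unfolding shift using B
    by (intro sum.cong refl emeasure_lborel_translate_vimage) (auto intro!: sets.Int borel_Times)
  also have "\<dots> = emeasure lborel (\<Union>jk\<in>K \<times> K. ?J jk \<inter> B)"
    using fin B disj by (intro sum_emeasure) (auto intro!: sets.Int borel_Times)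
  also have "\<dots> \<le> emeasure lborel B"
    using B by (intro emeasure_mono) auto
  finally show ?thesis .
qed

lemma emeasure_pair_preimage_le:
  assumes "B \<in> sets borel"
  shows "emeasure lborel (pair_preimage n B) \<le> emeasure lborel B"
proof (induction n)
  case 0
  show ?case unfolding pair_preimage_def using assms by (intro emeasure_mono) auto
next
  case (Suc n)
  have "emeasure lborel (pair_preimage 1 (pair_preimage n B)) \<le> emeasure lborel (pair_preimage n B)"
    using assms by (intro emeasure_pair_preimage_1_le pair_preimage_borel)
  then show ?case unfolding pair_preimage_Suc using Suc.IH by (rule order.trans)
qed

definition corner_boxes :: "real \<Rightarrow> (real \<times> real) set" where
  "corner_boxes d = (\<Union>k\<in>K. diag_box (lo k + c k) d)"

lemma corner_boxes_borel: "corner_boxes d \<in> sets borel"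
  unfolding corner_boxes_def using finite_pieces diag_box_borel by (intro sets.finite_UN) auto

lemma emeasure_corner_boxes_le:
  assumes "d \<ge> 0"
  shows "emeasure lborel (corner_boxes d) \<le> ennreal (real (card K) * 4 * d\<^sup>2)"
proof -
  have "emeasure lborel (corner_boxes d) \<le> (\<Sum>k\<in>K. emeasure lborel (diag_box (lo k + c k) d))"
    unfolding corner_boxes_def using finite_pieces diag_box_borel
    by (intro emeasure_subadditive_finite) auto
  also have "\<dots> = ennreal (real (card K) * 4 * d\<^sup>2)"
    using assms
    by (simp add: emeasure_diag_box ennreal_of_nat_eq_real_of_nat ennreal_mult' mult.assoc)
  finally show ?thesis .
qed

text \<open>Points at least \<open>d\<close> apart with images less than \<open>d\<close> apart lie in different pieces,
  whose images are disjoint intervals; so the images lie on either side of the left endpoint of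
  the right one of these two intervals.\<close>

lemma approach_in_corner_boxes:
  assumes a: "0 \<le> a" "a < 1" and b: "0 \<le> b" "b < 1"
    and far: "d \<le> \<bar>a - b\<bar>" and close: "\<bar>T a - T b\<bar> < d"
  shows "(T a, T b) \<in> corner_boxes d"
proof -
  obtain j where j: "j \<in> K" "lo j \<le> a" "a < hi j" using pieces_cover a by blast
  obtain k where k: "k \<in> K" "lo k \<le> b" "b < hi k" using pieces_cover b by blast
  have Ta: "T a = a + c j" and Tb: "T b = b + c k"
    using translate_on_piece[OF j] translate_on_piece[OF k] .
  have "j \<noteq> k" using Ta Tb far close by auto
  then consider "hi j + c j \<le> lo k + c k" | "hi k + c k \<le> lo j + c j"
    using images_disjoint[OF j(1) k(1)] by blast
  then show ?thesis
  proof cases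
    case 1
    then have "(T a, T b) \<in> diag_box (lo k + c k) d"
      unfolding diag_box_def using Ta Tb j k close by (auto simp: abs_if split: if_splits)
    then show ?thesis unfolding corner_boxes_def using k by blast
  next
    case 2
    then have "(T a, T b) \<in> diag_box (lo j + c j) d"
      unfolding diag_box_def using Ta Tb j k close by (auto simp: abs_if split: if_splits)
    then show ?thesis unfolding corner_boxes_def using j by blast
  qed
qed

lemma first_approach_in_corner_boxes:
  assumes z: "(x, y) \<in> unit_square" and far: "d \<le> \<bar>x - y\<bar>"
    and close: "\<bar>(T ^^ n) x - (T ^^ n) y\<bar> < d"
  shows "\<exists>m\<le>n. (x, y) \<in> pair_preimage m (corner_boxes d)"
proof -
  define m where "m = (LEAST m. \<bar>(T ^^ m) x - (T ^^ m) y\<bar> < d)"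
  have close_m: "\<bar>(T ^^ m) x - (T ^^ m) y\<bar> < d"
    unfolding m_def by (rule LeastI[of _ n]) (rule close)
  have "m \<le> n" unfolding m_def by (rule Least_le) (rule close)
  have "m \<noteq> 0" using close_m far by (cases m) auto
  then obtain m' where m': "m = Suc m'" by (cases m) auto
  have far_m': "d \<le> \<bar>(T ^^ m') x - (T ^^ m') y\<bar>"
    using not_less_Least[of m' "\<lambda>m. \<bar>(T ^^ m) x - (T ^^ m) y\<bar> < d"] m' unfolding m_def
    by (simp add: not_less)
  have "(T ((T ^^ m') x), T ((T ^^ m') y)) \<in> corner_boxes d"
    using z close_m far_m' m' funpow_maps_unit_interval[of x m'] funpow_maps_unit_interval[of y m']
    by (intro approach_in_corner_boxes) auto
  then show ?thesis
    using z m' \<open>m \<le> n\<close> unfolding pair_preimage_def by auto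
qed

definition early_approach :: "real \<Rightarrow> nat \<Rightarrow> (real \<times> real) set" where
  "early_approach q k = (\<Union>m\<le>2 ^ Suc k. pair_preimage m (corner_boxes (q ^ k)))"

lemma early_approach_borel: "early_approach q k \<in> sets borel"
  unfolding early_approach_def
  by (intro sets.finite_UN) (auto simp: pair_preimage_borel corner_boxes_borel)

lemma emeasure_early_approach_le:
  fixes q :: real
  assumes "q \<ge> 0"
  shows "emeasure lborel (early_approach q k) \<le> ennreal (16 * real (card K) * (2 * q\<^sup>2) ^ k)"
proof -
  have "emeasure lborel (early_approach q k)
      \<le> (\<Sum>m\<le>(2::nat) ^ Suc k. emeasure lborel (pair_preimage m (corner_boxes (q ^ k))))"
    unfolding early_approach_def
    by (intro emeasure_subadditive_finite) (auto simp: pair_preimage_borel corner_boxes_borel)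
  also have "\<dots> \<le> (\<Sum>m\<le>(2::nat) ^ Suc k. ennreal (real (card K) * 4 * (q ^ k)\<^sup>2))"
    using order.trans[OF emeasure_pair_preimage_le[OF corner_boxes_borel]
        emeasure_corner_boxes_le[of "q ^ k"]] assms
    by (intro sum_mono) simp
  also have "\<dots> = ennreal ((2 ^ Suc k + 1) * (real (card K) * 4 * (q ^ k)\<^sup>2))"
    by (simp add: ennreal_mult' ennreal_of_nat_eq_real_of_nat add.commute)
  also have "\<dots> \<le> ennreal (4 * 2 ^ k * (real (card K) * 4 * (q ^ k)\<^sup>2))"
  proof (intro ennreal_leI mult_right_mono)
    show "2 ^ Suc k + 1 \<le> 4 * (2::real) ^ k"
      using one_le_power[of "2::real" k] by (simp only: power_Suc) linarith
  qed simp
  also have "\<dots> = ennreal (16 * real (card K) * (2 * q\<^sup>2) ^ k)"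
    by (simp add: power_mult_distrib power_mult[symmetric] mult_ac)
  finally show ?thesis .
qed

lemma emeasure_late_early_approach_le:
  fixes q :: real
  assumes "q \<ge> 0" "2 * q\<^sup>2 < 1"
  shows "emeasure lborel (\<Union>i. early_approach q (k0 + i))
    \<le> ennreal (16 * real (card K) * (2 * q\<^sup>2) ^ k0 / (1 - 2 * q\<^sup>2))"
proof -
  define \<rho> where "\<rho> = 2 * q\<^sup>2"
  have \<rho>: "0 \<le> \<rho>" "\<rho> < 1" using assms unfolding \<rho>_def by auto
  have "emeasure lborel (\<Union>i. early_approach q (k0 + i))
      \<le> (\<Sum>i. emeasure lborel (early_approach q (k0 + i)))"
    using early_approach_borel by (intro emeasure_subadditive_countably) auto
  also have "\<dots> \<le> (\<Sum>i. ennreal (16 * real (card K) * \<rho> ^ k0 * \<rho> ^ i))"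
  proof (intro suminf_le summableI)
    show "emeasure lborel (early_approach q (k0 + i))
        \<le> ennreal (16 * real (card K) * \<rho> ^ k0 * \<rho> ^ i)" for i
      using emeasure_early_approach_le[OF assms(1), of "k0 + i"]
      by (simp add: \<rho>_def power_add mult.assoc)
  qed
  also have "\<dots> = ennreal (16 * real (card K) * \<rho> ^ k0 * (1 / (1 - \<rho>)))"
    using \<rho> by (intro suminf_ennreal_eq sums_mult geometric_sums) auto
  finally show ?thesis unfolding \<rho>_def by simp
qed

text \<open>If \<open>n\<^sup>\<alpha> |T\<^sup>n x - T\<^sup>n y| < 1\<close> with \<open>2\<^sup>k \<le> n < 2\<^sup>k\<^sup>+\<^sup>1\<close>, then the orbits come
  closer than \<open>q\<^sup>k\<close>, \<open>q = 2\<^sup>-\<^sup>\<alpha>\<close>, before time \<open>2\<^sup>k\<^sup>+\<^sup>1\<close>.\<close>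

lemma liminf_zero_imp_early_approach:
  fixes \<alpha> :: real
  defines "q \<equiv> 2 powr - \<alpha>"
  assumes \<alpha>: "\<alpha> > 0" and z: "(x, y) \<in> unit_square" and far: "q ^ k0 \<le> \<bar>x - y\<bar>"
    and lim: "liminf (\<lambda>n. ereal (real n powr \<alpha> * \<bar>(T ^^ n) x - (T ^^ n) y\<bar>)) = 0"
  shows "(x, y) \<in> (\<Union>i. early_approach q (k0 + i))"
proof -
  from lim have "liminf (\<lambda>n. ereal (real n powr \<alpha> * \<bar>(T ^^ n) x - (T ^^ n) y\<bar>)) < 1"
    by simp
  then obtain n where n: "2 ^ k0 \<le> n" "real n powr \<alpha> * \<bar>(T ^^ n) x - (T ^^ n) y\<bar> < 1"
    using liminf_less_frequently[where N = "2 ^ k0"] by fastforce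
  then have "n \<ge> 1" by (meson dual_order.trans one_le_numeral one_le_power)
  then obtain k where k: "2 ^ k \<le> n" "n < 2 ^ Suc k"
    using ex_power_ivl1[of 2 n] by auto
  have "(2::nat) ^ k0 < 2 ^ Suc k" using n(1) k(2) by linarith
  then have "k0 \<le> k" using power_less_imp_less_exp[of "2::nat" k0 "Suc k"] by simp
  have q: "0 < q" "q < 1" unfolding q_def using \<alpha> by (auto intro: powr_less_one)
  define dist where "dist = \<bar>(T ^^ n) x - (T ^^ n) y\<bar>"
  have "real (2 ^ k) powr \<alpha> * dist \<le> real n powr \<alpha> * dist"
    using k(1) \<alpha> unfolding dist_def by (intro mult_right_mono powr_mono2) auto
  with n(2) have "real (2 ^ k) powr \<alpha> * dist < 1" unfolding dist_def by linarith
  then have "q ^ k * (real (2 ^ k) powr \<alpha> * dist) < q ^ k * 1"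
    using q by (intro mult_strict_left_mono) auto
  moreover have "q ^ k * (real (2 ^ k) powr \<alpha> * dist) = dist"
    using powr_neg_pow_mult_pow_powr[of \<alpha> k] unfolding q_def by (metis mult.assoc mult_1)
  ultimately have close: "dist < q ^ k" by linarith
  have "q ^ k \<le> q ^ k0" using \<open>k0 \<le> k\<close> q by (intro power_decreasing) auto
  then obtain m where "m \<le> n" "(x, y) \<in> pair_preimage m (corner_boxes (q ^ k))"
    using first_approach_in_corner_boxes[OF z, of "q ^ k" n] far close unfolding dist_def by auto
  with k(2) have "(x, y) \<in> early_approach q (k0 + (k - k0))"
    using \<open>k0 \<le> k\<close> unfolding early_approach_def by auto
  then show ?thesis by blast
qed

lemma late_early_approach_small:
  fixes \<alpha> \<epsilon> :: real
  defines "q \<equiv> 2 powr - \<alpha>"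
  assumes \<alpha>: "\<alpha> > 1/2" and \<epsilon>: "\<epsilon> > 0"
  shows "\<exists>k0. q ^ k0 < \<epsilon> \<and> emeasure lborel (\<Union>i. early_approach q (k0 + i)) < ennreal \<epsilon>"
proof -
  define \<rho> where "\<rho> = 2 * q\<^sup>2"
  define bound where "bound k = 16 * real (card K) * \<rho> ^ k / (1 - \<rho>)" for k
  have q: "0 < q" "q < 1" unfolding q_def using \<alpha> by (auto intro: powr_less_one)
  have "\<rho> = 2 powr (1 - 2 * \<alpha>)"
    unfolding \<rho>_def q_def
    by (simp add: power2_eq_square powr_diff powr_minus field_simps flip: powr_add)
  then have \<rho>: "0 < \<rho>" "\<rho> < 1" using \<alpha> by (auto intro: powr_less_one)
  have "bound \<longlonglongrightarrow> 16 * real (card K) * 0 / (1 - \<rho>)"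
    unfolding bound_def using \<rho> by (intro tendsto_intros) auto
  then have "\<forall>\<^sub>F k in sequentially. bound k < \<epsilon>" using \<epsilon> by (intro order_tendstoD) auto
  moreover have "\<forall>\<^sub>F k in sequentially. q ^ k < \<epsilon>"
    using LIMSEQ_power_zero[of q] q \<epsilon> by (intro order_tendstoD) auto
  ultimately obtain k0 where k0: "bound k0 < \<epsilon>" "q ^ k0 < \<epsilon>"
    using eventually_sequentially by (metis (no_types, lifting) eventually_conj order.refl)
  have "emeasure lborel (\<Union>i. early_approach q (k0 + i)) \<le> ennreal (bound k0)"
    unfolding bound_def \<rho>_def using emeasure_late_early_approach_le q \<rho>
    by (auto simp: less_imp_le \<rho>_def)
  also have "\<dots> < ennreal \<epsilon>" using k0(1) \<epsilon> by (simp add: ennreal_lessI)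
  finally show ?thesis using k0(2) by blast
qed

lemma not_AE_liminf_powr_dist_eq_0:
  fixes \<alpha> :: real
  assumes \<alpha>: "\<alpha> > 1/2"
  shows "\<not> (AE z in lborel \<Otimes>\<^sub>M lborel. z \<in> unit_square \<longrightarrow>
           liminf (\<lambda>n. ereal (real n powr \<alpha> * \<bar>(T ^^ n) (fst z) - (T ^^ n) (snd z)\<bar>)) = 0)"
    (is "\<not> (AE z in _. ?good z)")
proof
  assume "AE z in lborel \<Otimes>\<^sub>M lborel. ?good z"
  then obtain N where N: "{z \<in> space lborel. \<not> ?good z} \<subseteq> N" "N \<in> sets lborel"
    "emeasure lborel N = 0"
    unfolding lborel_prod by (rule AE_E)
  define q where "q = (2::real) powr - \<alpha>"
  obtain k0 where k0: "q ^ k0 < 1/8" "emeasure lborel (\<Union>i. early_approach q (k0 + i)) < ennreal (1/8)"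
    using late_early_approach_small[OF \<alpha>, of "1/8"] unfolding q_def by auto
  define W where "W = (\<Union>i. early_approach q (k0 + i))"
  have "(x, y) \<in> N \<union> diagonal_strip_cover 8 \<union> W" if xy: "(x, y) \<in> unit_square" for x y
  proof (cases "(x, y) \<in> N")
    case False
    then have "(x, y) \<notin> {z \<in> space lborel. \<not> ?good z}" using N(1) by blast
    then have "?good (x, y)" by simp
    with xy have "(x, y) \<in> W \<or> \<bar>x - y\<bar> < q ^ k0"
      using liminf_zero_imp_early_approach[of \<alpha> x y k0] \<alpha> unfolding W_def q_def by force
    then show ?thesis using diagonal_strip_cover_covers[of 8 x y] k0(1) xy by auto
  qed simp
  then have "unit_square \<subseteq> N \<union> diagonal_strip_cover 8 \<union> W" by blast
  then have "emeasure lborel unit_square \<le> emeasure lborel (N \<union> diagonal_strip_cover 8 \<union> W)"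
    using N(2) diagonal_strip_cover_borel early_approach_borel unfolding W_def
    by (intro emeasure_mono) auto
  also have "\<dots> \<le> emeasure lborel N + emeasure lborel (diagonal_strip_cover 8) + emeasure lborel W"
    using N(2) diagonal_strip_cover_borel early_approach_borel unfolding W_def
    by (intro order.trans[OF emeasure_subadditive] add_right_mono emeasure_subadditive) auto
  also have "\<dots> \<le> ennreal (3/8) + ennreal (1/8)"
    using N(3) k0(2) emeasure_diagonal_strip_cover[of 8] unfolding W_def
    by (simp add: add_mono less_imp_le)
  also have "\<dots> = ennreal (1/2)"
    by (subst ennreal_plus[symmetric]) auto
  finally have "1 \<le> ennreal (1/2)" by (simp only: emeasure_unit_square)
  then show False by (simp only: ennreal_ge_1)
qed
end

lemma is_iet_piecewise_translation:
  assumes "is_iet T"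
  shows "\<exists>K lo hi c. piecewise_translation T K lo hi c"
proof -
  obtain r p l where perm: "p permutes {1..r}" and pos: "\<forall>i\<in>{1..r}. l i > 0"
    and tot: "(\<Sum>i\<in>{1..r}. l i) = 1" and T: "\<forall>x\<in>{0..<1}. T x = iet_map r p l x"
    using assms unfolding is_iet_def by blast
  define c where "c k = iet_image_start r p l k - iet_s l (k - 1)" for k
  have s_r: "iet_s l r = 1" using tot by (simp add: iet_s_def)
  have s_k: "iet_s l k = iet_s l (k - 1) + l k" if "k \<in> {1..r}" for k
    using that iet_s_Suc[of l "k - 1"] by simp
  have in_unit: "0 \<le> iet_s l (k - 1) \<and> iet_s l k \<le> 1" if "k \<in> {1..r}" for k
    using iet_s_mono[OF pos, of 0 "k - 1"] iet_s_mono[OF pos, of k r] that s_r by auto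
  have "piecewise_translation T {1..r} (\<lambda>k. iet_s l (k - 1)) (iet_s l) c"
  proof
    show "\<exists>k\<in>{1..r}. iet_s l (k - 1) \<le> x \<and> x < iet_s l k" if "0 \<le> x" "x < 1" for x
      using iet_interval_exists[OF pos s_r that] .
    show "T x = x + c k" if k: "k \<in> {1..r}" "iet_s l (k - 1) \<le> x" "x < iet_s l k" for k x
      using T iet_map_on_interval[OF pos k, of p] in_unit[OF k(1)] k unfolding c_def by auto
    show "0 \<le> iet_s l (k - 1) + c k \<and> iet_s l k + c k \<le> 1" if "k \<in> {1..r}" for k
      using iet_image_in_unit[OF pos tot that, of p] s_k[OF that] unfolding c_def by simp
    show "iet_s l j + c j \<le> iet_s l (k - 1) + c k \<or> iet_s l k + c k \<le> iet_s l (j - 1) + c j"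
      if jk: "j \<in> {1..r}" "k \<in> {1..r}" "j \<noteq> k" for j k
    proof -
      have "p j \<noteq> p k" using permutes_inj[OF perm] jk(3) by (auto dest: injD)
      then have "p j < p k \<or> p k < p j" by arith
      then show ?thesis
        using iet_image_start_add_le[OF pos jk(1,2), where p = p]
          iet_image_start_add_le[OF pos jk(2,1), where p = p] s_k[OF jk(1)] s_k[OF jk(2)]
        unfolding c_def by auto
    qed
  qed (use in_unit in auto)
  then show ?thesis by blast
qed

theorem proposition7p1:
  fixes T :: "real \<Rightarrow> real"
  assumes "is_iet T"
  shows "C_psi T \<le> ereal (1/2)"
proof -
  obtain K lo hi c where "piecewise_translation T K lo hi c"
    using is_iet_piecewise_translation[OF assms] by blast
  then interpret piecewise_translation T K lo hi c .
  show ?thesis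
    unfolding C_psi_def
    using not_AE_liminf_powr_dist_eq_0 by (fastforce intro!: Sup_least simp: not_less)
qed

end
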